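(* Let $D\ge1$, let $X=\{0,1\}^D$, and let $Q_D$ be the $D$-dimensional hypercube on $X$. For a real matrix $B$ with rows and columns indexed by $X$, the following are equivalent: (i) $B_{xy}=0$ for all $x,y\in X$ that are neither equal nor adjacent in $Q_D$; (ii) for all $1\le i<j\le D$, $$\alpha^*_i\alpha^*_jB-\alpha^*_iB\alpha^*_j-\alpha^*_jB\alpha^*_i+B\alpha^*_i\alpha^*_j=0.$$
   Context: $Q_D$ is the graph with vertex set $X=\{0,1\}^D$ (sequences $x=(x_1,\ldots,x_D)$), two vertices adjacent iff they differ in exactly one coordinate. For $1\le i\le D$, $\alpha^*_i$ is the diagonal matrix with $(x,x)$-entry $1$ if $x_i=0$ and $-1$ if $x_i=1$. *)

theory Defs
  imports "HOL-Analysis.Analysis"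
begin

text \<open>Vertex set X = {0,1}^D, represented as boolean lists of length D
  (True = 1, False = 0); coordinate x_i (1 <= i <= D) is x ! (i - 1).\<close>
definition cube :: "nat \<Rightarrow> bool list set" where
  "cube D = {x. length x = D}"

definition cube_adj :: "nat \<Rightarrow> bool list \<Rightarrow> bool list \<Rightarrow> bool" where
  "cube_adj D x y \<longleftrightarrow> x \<in> cube D \<and> y \<in> cube D \<and>
     card {k. k < D \<and> x ! k \<noteq> y ! k} = 1"

type_synonym mat = "bool list \<Rightarrow> bool list \<Rightarrow> real"

definition mmul :: "nat \<Rightarrow> mat \<Rightarrow> mat \<Rightarrow> mat" where
  "mmul D A B = (\<lambda>x y. \<Sum>z\<in>cube D. A x z * B z y)"

definition alpha_star :: "nat \<Rightarrow> mat" where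
  "alpha_star i = (\<lambda>x y. if x = y then (if x ! (i - 1) then -1 else 1) else 0)"

end

theory Submission
  imports Defs
begin

text \<open>Every \<open>\<alpha>\<^sup>*\<^sub>i\<close> is diagonal, so the \<open>(x,y)\<close>-entry of
  \<open>\<alpha>\<^sup>*\<^sub>i\<alpha>\<^sup>*\<^sub>jB - \<alpha>\<^sup>*\<^sub>iB\<alpha>\<^sup>*\<^sub>j - \<alpha>\<^sup>*\<^sub>jB\<alpha>\<^sup>*\<^sub>i + B\<alpha>\<^sup>*\<^sub>i\<alpha>\<^sup>*\<^sub>j\<close> factors as
  \<open>(s\<^sub>i(x) - s\<^sub>i(y)) (s\<^sub>j(x) - s\<^sub>j(y)) B\<^sub>x\<^sub>y\<close>, where \<open>s\<^sub>i\<close> is the sign of the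
  \<open>i\<close>-th coordinate. The product of the two differences is nonzero exactly when
  \<open>x\<close> and \<open>y\<close> differ in both coordinates \<open>i\<close> and \<open>j\<close>, and two vertices differ in
  at least two coordinates iff they are neither equal nor adjacent.\<close>

lemma finite_cube: "finite (cube D)"
proof -
  have "cube D = {xs. set xs \<subseteq> UNIV \<and> length xs = D}"
    by (auto simp: cube_def)
  then show ?thesis
    using finite_lists_length_eq[of "UNIV :: bool set" D] by simp
qed

definition diag_mat :: "(bool list \<Rightarrow> real) \<Rightarrow> mat" where
  "diag_mat d = (\<lambda>x y. if x = y then d x else 0)"

lemma mmul_diag_mat_left:
  assumes "x \<in> cube D"
  shows "mmul D (diag_mat d) M x y = d x * M x y"
proof -
  have "mmul D (diag_mat d) M x y = (\<Sum>z\<in>cube D. if x = z then d x * M z y else 0)"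
    unfolding mmul_def diag_mat_def by (rule sum.cong) auto
  then show ?thesis
    using finite_cube assms by simp
qed

lemma mmul_diag_mat_right:
  assumes "y \<in> cube D"
  shows "mmul D M (diag_mat d) x y = M x y * d y"
proof -
  have "mmul D M (diag_mat d) x y = (\<Sum>z\<in>cube D. if y = z then M x y * d y else 0)"
    unfolding mmul_def diag_mat_def by (rule sum.cong) auto
  then show ?thesis
    using finite_cube assms by simp
qed

lemma mmul_diag_mat_diag_mat:
  "mmul D (diag_mat d) (diag_mat e) = diag_mat (\<lambda>x. if x \<in> cube D then d x * e x else 0)"
proof (intro ext)
  fix x y
  show "mmul D (diag_mat d) (diag_mat e) x y =
        diag_mat (\<lambda>x. if x \<in> cube D then d x * e x else 0) x y"
  proof (cases "x \<in> cube D")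
    case True
    then show ?thesis by (simp add: mmul_diag_mat_left) (auto simp: diag_mat_def)
  next
    case False
    then have "x \<noteq> z" if "z \<in> cube D" for z using that by blast
    with False show ?thesis by (simp add: mmul_def diag_mat_def)
  qed
qed

lemma double_commutator_diag_mat:
  assumes "x \<in> cube D" "y \<in> cube D"
  shows "mmul D (mmul D (diag_mat d) (diag_mat e)) B x y
         - mmul D (mmul D (diag_mat d) B) (diag_mat e) x y
         - mmul D (mmul D (diag_mat e) B) (diag_mat d) x y
         + mmul D (mmul D B (diag_mat d)) (diag_mat e) x y
       = (d x - d y) * (e x - e y) * B x y"
  using assms
  by (simp add: mmul_diag_mat_diag_mat mmul_diag_mat_left mmul_diag_mat_right algebra_simps)

definition coord_sign :: "nat \<Rightarrow> bool list \<Rightarrow> real" where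
  "coord_sign i x = (if x ! (i - 1) then -1 else 1)"

lemma alpha_star_eq_diag_mat: "alpha_star i = diag_mat (coord_sign i)"
  by (simp add: fun_eq_iff alpha_star_def diag_mat_def coord_sign_def)

lemma coord_sign_eq_iff:
  "coord_sign i x = coord_sign i y \<longleftrightarrow> x ! (i - 1) = y ! (i - 1)"
  by (simp add: coord_sign_def)

lemma cube_distinct_nonadj_iff:
  assumes "x \<in> cube D" "y \<in> cube D"
  shows "x \<noteq> y \<and> \<not> cube_adj D x y \<longleftrightarrow>
         (\<exists>a b. a < b \<and> b < D \<and> x ! a \<noteq> y ! a \<and> x ! b \<noteq> y ! b)"
proof -
  define S where "S = {k. k < D \<and> x ! k \<noteq> y ! k}"
  have "x = y \<longleftrightarrow> S = {}"
    using assms by (auto simp: S_def cube_def intro: nth_equalityI)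
  moreover have "cube_adj D x y \<longleftrightarrow> card S = 1"
    using assms by (simp add: cube_adj_def S_def)
  moreover have "finite S"
    by (simp add: S_def)
  ultimately have "x \<noteq> y \<and> \<not> cube_adj D x y \<longleftrightarrow> \<not> card S \<le> Suc 0"
    by (auto simp: le_Suc_eq)
  also have "\<dots> \<longleftrightarrow> (\<exists>a\<in>S. \<exists>b\<in>S. a \<noteq> b)"
    using \<open>finite S\<close> by (auto simp: card_le_Suc0_iff_eq)
  also have "\<dots> \<longleftrightarrow> (\<exists>a b. a < b \<and> b < D \<and> x ! a \<noteq> y ! a \<and> x ! b \<noteq> y ! b)"
  proof
    assume "\<exists>a\<in>S. \<exists>b\<in>S. a \<noteq> b"
    then obtain a b where "a \<in> S" "b \<in> S" "a < b"
      by (metis linorder_neqE_nat)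
    then show "\<exists>a b. a < b \<and> b < D \<and> x ! a \<noteq> y ! a \<and> x ! b \<noteq> y ! b"
      by (auto simp: S_def)
  next
    assume "\<exists>a b. a < b \<and> b < D \<and> x ! a \<noteq> y ! a \<and> x ! b \<noteq> y ! b"
    then obtain a b where "a < b" "b < D" "x ! a \<noteq> y ! a" "x ! b \<noteq> y ! b"
      by blast
    then have "a \<in> S" "b \<in> S" "a \<noteq> b"
      by (simp_all add: S_def)
    then show "\<exists>a\<in>S. \<exists>b\<in>S. a \<noteq> b"
      by blast
  qed
  finally show ?thesis .
qed

lemma all_pairs_one_based_iff:
  fixes n :: nat
  shows "(\<forall>i j. 1 \<le> i \<and> i < j \<and> j \<le> n \<longrightarrow> P (i - 1) (j - 1)) \<longleftrightarrow>
   (\<forall>a b. a < b \<and> b < n \<longrightarrow> P a b)"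
proof (intro iffI allI impI)
  fix a b :: nat
  assume "\<forall>i j. 1 \<le> i \<and> i < j \<and> j \<le> n \<longrightarrow> P (i - 1) (j - 1)" and "a < b \<and> b < n"
  then have "P (Suc a - 1) (Suc b - 1)"
    by (metis Suc_le_eq Suc_less_eq le_add1 plus_1_eq_Suc)
  then show "P a b"
    by simp
next
  fix i j
  assume "\<forall>a b. a < b \<and> b < n \<longrightarrow> P a b" and "1 \<le> i \<and> i < j \<and> j \<le> n"
  moreover from this(2) have "i - 1 < j - 1 \<and> j - 1 < n"
    by arith
  ultimately show "P (i - 1) (j - 1)"
    by blast
qed

theorem lemma7p2:
  fixes D :: nat and B :: mat
  assumes "D \<ge> 1"
  shows "(\<forall>x\<in>cube D. \<forall>y\<in>cube D. x \<noteq> y \<and> \<not> cube_adj D x y \<longrightarrow> B x y = 0)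
     \<longleftrightarrow>
     (\<forall>i j. 1 \<le> i \<and> i < j \<and> j \<le> D \<longrightarrow>
        (\<forall>x\<in>cube D. \<forall>y\<in>cube D.
           mmul D (mmul D (alpha_star i) (alpha_star j)) B x y
         - mmul D (mmul D (alpha_star i) B) (alpha_star j) x y
         - mmul D (mmul D (alpha_star j) B) (alpha_star i) x y
         + mmul D (mmul D B (alpha_star i)) (alpha_star j) x y = 0))"
    (is "?vanishes \<longleftrightarrow> (\<forall>i j. _ \<longrightarrow> ?comm_vanishes i j)")
proof -
  let ?differ = "\<lambda>a b. \<forall>x\<in>cube D. \<forall>y\<in>cube D. x ! a \<noteq> y ! a \<and> x ! b \<noteq> y ! b \<longrightarrow> B x y = 0"
  have "?vanishes \<longleftrightarrow> (\<forall>a b. a < b \<and> b < D \<longrightarrow> ?differ a b)"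
    by (auto simp: cube_distinct_nonadj_iff)
  moreover have "?comm_vanishes i j \<longleftrightarrow> ?differ (i - 1) (j - 1)" for i j
    by (auto simp: alpha_star_eq_diag_mat double_commutator_diag_mat coord_sign_eq_iff)
  ultimately show ?thesis
    using all_pairs_one_based_iff[of D ?differ] by simp
qed

end
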